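(* Let $\tau_S$, $S\in\mathcal S$, be the equivariant Schubert (canonical) classes of $G_k(\mathbb C^n)$ and let $N_{S,S'}^{S''}\in\mathbb Q[\alpha_1,\dots,\alpha_n]$ be the equivariant Littlewood–Richardson coefficients defined by $\tau_S\tau_{S'}=\sum_{S''\in\mathcal S}N_{S,S'}^{S''}\tau_{S''}$. Let $\sigma_S\in H^*_T(G_{2k}(\mathbb R^{2n}))$ be the class with fixed-point restrictions $(\sigma_S)_{S'}=Sq(\tau_S(S'))$. Then $$\sigma_S\sigma_{S'}=\sum_{S''\in\mathcal S}Sq(N_{S,S'}^{S''})\,\sigma_{S''},$$ where $Sq(N_{S,S'}^{S''})\in\mathbb Q[\alpha_1^2,\dots,\alpha_n^2]$. In particular the structure constants of the corresponding bases of the ordinary cohomology of $G_k(\mathbb C^n)$ and of $G_{2k}(\mathbb R^{2n})$ coincide.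
   Context: Let $T=T^n=(S^1)^n$ with standard integral weights $\alpha_1,\dots,\alpha_n$; $H^*_T(\mathrm{pt};\mathbb Q)=\mathbb Q[\alpha_1,\dots,\alpha_n]$. $T$ acts on $\mathbb C^n$ by $(t_i)\cdot(z_i)=(t_iz_i)$ and on $\mathbb R^{2n}=\bigoplus_i\mathbb R^2_{[\alpha_i]}$ (the $i$-th circle rotating the $i$-th coordinate plane), inducing actions on $G_k(\mathbb C^n)$ and $G_{2k}(\mathbb R^{2n})$. $\mathcal S$ is the set of $k$-element subsets of $\{1,\dots,n\}$; the fixed points of $G_k(\mathbb C^n)$ are $\bigoplus_{i\in S}\mathbb C_i$ and those of $G_{2k}(\mathbb R^{2n})$ are $\bigoplus_{i\in S}\mathbb R^2_{[\alpha_i]}$, and in both cases restriction to fixed points ($f\mapsto(f(S))_S$ resp. $(f_S)_S$) is injective. The canonical classes $\tau_S$ are the classes of degree $2\sum_{i\in S}i-k(k+1)$ with $\tau_S(S')=0$ for $S'\ne S$ with $\sum_{i\in S'}i\le\sum_{i\in S}i$ and $\tau_S(S)=\prod_{i\in S,j\notin S,j<i}(\alpha_j-\alpha_i)$; they form a $\mathbb Q[\alpha_1,\dots,\alpha_n]$-basis of $H^*_T(G_k(\mathbb C^n))$. $Sq$ is the ring endomorphism of $\mathbb Q[\alpha_1,\dots,\alpha_n]$ with $Sq(f)(\alpha_1,\dots,\alpha_n)=f(\alpha_1^2,\dots,\alpha_n^2)$. *)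

theory Defs
  imports Complex_Main "HOL-Library.Poly_Mapping"
begin

text \<open>Rational polynomials in the variables alpha_1, alpha_2, ... : a monomial is a
  finitely supported exponent vector nat with finite support, a polynomial a finitely supported
  coefficient function on monomials.\<close>
type_synonym mpoly = "(nat \<Rightarrow>\<^sub>0 nat) \<Rightarrow>\<^sub>0 rat"

definition var :: "nat \<Rightarrow> mpoly" where
  "var i = Poly_Mapping.single (Poly_Mapping.single i 1) 1"

definition in_Q_alpha :: "nat \<Rightarrow> mpoly \<Rightarrow> bool" where
  "in_Q_alpha n f \<longleftrightarrow> (\<forall>m\<in>Poly_Mapping.keys f. Poly_Mapping.keys m \<subseteq> {1..n})"

text \<open>f is homogeneous of polynomial degree d (cohomological degree 2d).\<close>
definition homogeneous :: "nat \<Rightarrow> mpoly \<Rightarrow> bool" where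
  "homogeneous d f \<longleftrightarrow> (\<forall>m\<in>Poly_Mapping.keys f. (\<Sum>i\<in>Poly_Mapping.keys m. Poly_Mapping.lookup m i) = d)"

text \<open>Sq f (alpha_1,...,alpha_n) = f (alpha_1^2, ..., alpha_n^2): double every exponent.\<close>
definition Sq :: "mpoly \<Rightarrow> mpoly" where
  "Sq f = (\<Sum>m\<in>Poly_Mapping.keys f. Poly_Mapping.single (m + m) (Poly_Mapping.lookup f m))"

text \<open>The index set of fixed points: k-element subsets of {1..n}.\<close>
definition subsets_k :: "nat \<Rightarrow> nat \<Rightarrow> nat set set" where
  "subsets_k n k = {S. S \<subseteq> {1..n} \<and> card S = k}"

text \<open>Tuples of fixed-point restrictions (f(S))_S lying in the image of
  H_T^*(G_k(C^n)), described by the GKM conditions.\<close>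
definition equivariant_class :: "nat \<Rightarrow> nat \<Rightarrow> (nat set \<Rightarrow> mpoly) \<Rightarrow> bool" where
  "equivariant_class n k f \<longleftrightarrow>
     (\<forall>S\<in>subsets_k n k. in_Q_alpha n (f S)) \<and>
     (\<forall>S\<in>subsets_k n k. \<forall>i\<in>S. \<forall>j\<in>{1..n} - S.
        (var i - var j) dvd (f S - f (insert j (S - {i}))))"

text \<open>tau S is the canonical class tau_S, given by its restrictions tau S S' = tau_S(S').\<close>
definition canonical_classes :: "nat \<Rightarrow> nat \<Rightarrow> (nat set \<Rightarrow> nat set \<Rightarrow> mpoly) \<Rightarrow> bool" where
  "canonical_classes n k tau \<longleftrightarrow>
     (\<forall>S\<in>subsets_k n k.
        equivariant_class n k (tau S) \<and>
        (\<forall>S'\<in>subsets_k n k. homogeneous (\<Sum>S - k * (k + 1) div 2) (tau S S')) \<and>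
        (\<forall>S'\<in>subsets_k n k. S' \<noteq> S \<and> \<Sum>S' \<le> \<Sum>S \<longrightarrow> tau S S' = 0) \<and>
        tau S S = (\<Prod>i\<in>S. \<Prod>j\<in>{j\<in>{1..n} - S. j < i}. var j - var i))"

definition in_Q_alpha_sq :: "nat \<Rightarrow> mpoly \<Rightarrow> bool" where
  "in_Q_alpha_sq n f \<longleftrightarrow> in_Q_alpha n f \<and>
     (\<forall>m\<in>Poly_Mapping.keys f. \<forall>i. even (Poly_Mapping.lookup m i))"

text \<open>Constant term (the value at alpha = 0); it gives the image in ordinary cohomology.\<close>
definition const_term :: "mpoly \<Rightarrow> rat" where
  "const_term f = Poly_Mapping.lookup f 0"

end

theory Submission
  imports Defs
begin

text \<open>Sq is the pushforward of coefficients along the doubling map m \<mapsto> m + m on exponent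
  vectors, and pushing coefficients forward along any additive map of monomials is a ring
  homomorphism of polynomial rings. Applying Sq to the equivariant Littlewood-Richardson identity
  at every fixed point therefore gives the identity for the classes sigma. Since Sq only produces
  doubled exponent vectors, Sq N lies in Q[alpha_1^2,...,alpha_n^2], and since doubling is
  injective and fixes the zero vector, Sq does not change constant terms.\<close>

definition push_keys :: "('a \<Rightarrow> 'b) \<Rightarrow> ('a \<Rightarrow>\<^sub>0 'c::comm_monoid_add) \<Rightarrow> 'b \<Rightarrow>\<^sub>0 'c" where
  "push_keys h f = (\<Sum>m\<in>Poly_Mapping.keys f. Poly_Mapping.single (h m) (Poly_Mapping.lookup f m))"

lemma push_keys_eq_sum:
  assumes "finite A" and "Poly_Mapping.keys f \<subseteq> A"
  shows "push_keys h f = (\<Sum>m\<in>A. Poly_Mapping.single (h m) (Poly_Mapping.lookup f m))"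
  unfolding push_keys_def
  using assms by (intro sum.mono_neutral_left) (auto simp: in_keys_iff)

lemma push_keys_id: "push_keys id f = f"
proof (rule poly_mapping_eqI)
  fix x
  show "Poly_Mapping.lookup (push_keys id f) x = Poly_Mapping.lookup f x"
    by (cases "x \<in> Poly_Mapping.keys f")
      (simp_all add: push_keys_def lookup_sum lookup_single when_def in_keys_iff)
qed

lemma push_keys_0 [simp]: "push_keys h 0 = 0"
  by (simp add: push_keys_def)

lemma push_keys_single [simp]:
  "push_keys h (Poly_Mapping.single a c) = Poly_Mapping.single (h a) c"
  by (cases "c = 0") (simp_all add: push_keys_def)

lemma push_keys_add: "push_keys h (f + g) = push_keys h f + push_keys h g"
proof -
  let ?A = "Poly_Mapping.keys f \<union> Poly_Mapping.keys g"
  have "push_keys h (f + g)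
      = (\<Sum>m\<in>?A. Poly_Mapping.single (h m) (Poly_Mapping.lookup f m + Poly_Mapping.lookup g m))"
    by (subst push_keys_eq_sum[of ?A]) (auto simp: keys_add lookup_add)
  also have "\<dots> = push_keys h f + push_keys h g"
    by (simp add: push_keys_eq_sum[of ?A] single_add sum.distrib)
  finally show ?thesis .
qed

lemma push_keys_sum: "push_keys h (\<Sum>i\<in>I. f i) = (\<Sum>i\<in>I. push_keys h (f i))"
  by (induction I rule: infinite_finite_induct) (simp_all add: push_keys_add)

lemma push_keys_mult:
  fixes h :: "'a::monoid_add \<Rightarrow> 'b::monoid_add" and f g :: "'a \<Rightarrow>\<^sub>0 'c::semiring_0"
  assumes h_add: "\<And>a b. h (a + b) = h a + h b"
  shows "push_keys h (f * g) = push_keys h f * push_keys h g"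
proof -
  have "f * g = push_keys id f * push_keys id g"
    by (simp add: push_keys_id)
  also have "\<dots> = (\<Sum>a\<in>Poly_Mapping.keys f. \<Sum>b\<in>Poly_Mapping.keys g.
      Poly_Mapping.single (a + b) (Poly_Mapping.lookup f a * Poly_Mapping.lookup g b))"
    by (simp add: push_keys_def sum_distrib_left sum_distrib_right mult_single
        sum.swap[of _ "Poly_Mapping.keys g"])
  finally have "push_keys h (f * g) = (\<Sum>a\<in>Poly_Mapping.keys f. \<Sum>b\<in>Poly_Mapping.keys g.
      Poly_Mapping.single (h a + h b) (Poly_Mapping.lookup f a * Poly_Mapping.lookup g b))"
    by (simp add: push_keys_sum h_add)
  also have "\<dots> = push_keys h f * push_keys h g"
    by (simp add: push_keys_def sum_distrib_left sum_distrib_right mult_single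
        sum.swap[of _ "Poly_Mapping.keys g"])
  finally show ?thesis .
qed

lemma keys_push_keys: "Poly_Mapping.keys (push_keys h f) \<subseteq> h ` Poly_Mapping.keys f"
  unfolding push_keys_def by (rule order_trans[OF keys_sum]) auto

lemma lookup_push_keys:
  assumes "inj h"
  shows "Poly_Mapping.lookup (push_keys h f) (h m) = Poly_Mapping.lookup f m"
proof -
  have "Poly_Mapping.lookup (push_keys h f) (h m)
      = (\<Sum>m'\<in>Poly_Mapping.keys f. Poly_Mapping.lookup f m' when m' = m)"
    unfolding push_keys_def lookup_sum lookup_single
    using injD[OF assms] by (intro sum.cong) (auto simp: when_def)
  then show ?thesis
    by (cases "m \<in> Poly_Mapping.keys f") (simp_all add: when_def in_keys_iff)
qed

lemma lookup_double: "Poly_Mapping.lookup (m + m) i = 2 * Poly_Mapping.lookup (m :: 'a \<Rightarrow>\<^sub>0 nat) i"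
  by (simp add: lookup_add)

lemma inj_double: "inj (\<lambda>m :: 'a \<Rightarrow>\<^sub>0 nat. m + m)"
  by (rule injI, rule poly_mapping_eqI) (metis lookup_double mult_cancel_left zero_neq_numeral)

lemma Sq_eq_push_keys: "Sq = push_keys (\<lambda>m. m + m)"
  by (simp add: fun_eq_iff Sq_def push_keys_def)

lemma Sq_mult: "Sq (f * g) = Sq f * Sq g"
  unfolding Sq_eq_push_keys by (rule push_keys_mult) (simp add: add_ac)

lemma Sq_sum: "Sq (\<Sum>i\<in>I. f i) = (\<Sum>i\<in>I. Sq (f i))"
  unfolding Sq_eq_push_keys by (rule push_keys_sum)

lemma in_Q_alpha_sq_Sq:
  assumes "in_Q_alpha n f"
  shows "in_Q_alpha_sq n (Sq f)"
proof -
  have keys_double: "Poly_Mapping.keys (m + m) = Poly_Mapping.keys m" for m :: "nat \<Rightarrow>\<^sub>0 nat"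
    by (auto simp: in_keys_iff lookup_double)
  have "\<exists>m\<in>Poly_Mapping.keys f. x = m + m" if "x \<in> Poly_Mapping.keys (Sq f)" for x
    using that keys_push_keys[of "\<lambda>m. m + m" f] unfolding Sq_eq_push_keys by blast
  with assms show ?thesis
    unfolding in_Q_alpha_sq_def in_Q_alpha_def by (metis keys_double lookup_double dvd_triv_left)
qed

lemma const_term_Sq: "const_term (Sq f) = const_term f"
  using lookup_push_keys[OF inj_double, of f 0] by (simp add: const_term_def Sq_eq_push_keys)

theorem mainTheorem6:
  fixes n k :: nat
    and tau :: "nat set \<Rightarrow> nat set \<Rightarrow> mpoly"
    and N :: "nat set \<Rightarrow> nat set \<Rightarrow> nat set \<Rightarrow> mpoly"
    and sigma :: "nat set \<Rightarrow> nat set \<Rightarrow> mpoly"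
  assumes tau: "canonical_classes n k tau"
    and N_poly: "\<forall>S\<in>subsets_k n k. \<forall>S'\<in>subsets_k n k. \<forall>S''\<in>subsets_k n k.
                   in_Q_alpha n (N S S' S'')"
    and N_LR: "\<forall>S\<in>subsets_k n k. \<forall>S'\<in>subsets_k n k. \<forall>T\<in>subsets_k n k.
                 tau S T * tau S' T = (\<Sum>S''\<in>subsets_k n k. N S S' S'' * tau S'' T)"
    and sigma: "\<forall>S\<in>subsets_k n k. \<forall>T\<in>subsets_k n k. sigma S T = Sq (tau S T)"
  shows "\<forall>S\<in>subsets_k n k. \<forall>S'\<in>subsets_k n k. \<forall>T\<in>subsets_k n k.
           sigma S T * sigma S' T = (\<Sum>S''\<in>subsets_k n k. Sq (N S S' S'') * sigma S'' T)
         \<and> (\<forall>S\<in>subsets_k n k. \<forall>S'\<in>subsets_k n k. \<forall>S''\<in>subsets_k n k.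
               in_Q_alpha_sq n (Sq (N S S' S'')) \<and>
               const_term (Sq (N S S' S'')) = const_term (N S S' S''))"
proof -
  have "sigma S T * sigma S' T = (\<Sum>S''\<in>subsets_k n k. Sq (N S S' S'') * sigma S'' T)"
    if "S \<in> subsets_k n k" "S' \<in> subsets_k n k" "T \<in> subsets_k n k" for S S' T
  proof -
    have "sigma S T * sigma S' T = Sq (tau S T * tau S' T)"
      using sigma that by (simp add: Sq_mult)
    also have "\<dots> = Sq (\<Sum>S''\<in>subsets_k n k. N S S' S'' * tau S'' T)"
      using N_LR that by simp
    also have "\<dots> = (\<Sum>S''\<in>subsets_k n k. Sq (N S S' S'') * sigma S'' T)"
      using sigma that by (simp add: Sq_sum Sq_mult)
    finally show ?thesis .
  qed
  then show ?thesis
    using N_poly in_Q_alpha_sq_Sq const_term_Sq by blast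
qed

end
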